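(* Let $\varphi_A(X):=\sum_{i=1}^nA_iXA_i^*$ ($n\in\mathbb N$ or $n=\infty$) be a $w^*$-continuous completely positive linear map on $B(\mathcal H)$ with $\|\varphi_A\|\le1$, and let $\varphi_A^\infty(I):=\text{SOT-}\lim_{k\to\infty}\varphi_A^k(I)$ (which exists). Then $\ker(I-\varphi_A^\infty(I))$ and $\ker\varphi_A^\infty(I)$ are mutually orthogonal, so that $\mathcal H=\mathcal M\oplus\ker(I-\varphi_A^\infty(I))\oplus\ker\varphi_A^\infty(I)$ with $\mathcal M$ the orthogonal complement of the other two, and the subspaces $\ker(I-\varphi_A^\infty(I))$ and $\ker\varphi_A^\infty(I)$ are invariant under each $A_i^*$. If in addition $\varphi_A^\infty(I)$ is an orthogonal projection, then $\mathcal H=\ker(I-\varphi_A^\infty(I))\oplus\ker\varphi_A^\infty(I)$ and both subspaces are reducing for each $A_i$. *)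

theory Defs
  imports "HOL-Analysis.Analysis"
begin

text \<open>The distribution has no complex Hilbert spaces, so we introduce them as a type class.
  The inner product is conjugate-linear in the first and linear in the second argument.\<close>

class complex_inner = real_normed_vector +
  fixes cscale :: "complex \<Rightarrow> 'a \<Rightarrow> 'a"
    and cinner :: "'a \<Rightarrow> 'a \<Rightarrow> complex"
  assumes cscale_add_right: "cscale a (x + y) = cscale a x + cscale a y"
    and cscale_add_left: "cscale (a + b) x = cscale a x + cscale b x"
    and cscale_cscale: "cscale a (cscale b x) = cscale (a * b) x"
    and cscale_one: "cscale 1 x = x"
    and cscale_of_real: "cscale (complex_of_real r) x = scaleR r x"
    and cinner_commute: "cinner x y = cnj (cinner y x)"
    and cinner_add_right: "cinner x (y + z) = cinner x y + cinner x z"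
    and cinner_cscale_right: "cinner x (cscale a y) = a * cinner x y"
    and cinner_eq_zero_iff: "cinner x x = 0 \<longleftrightarrow> x = 0"
    and cinner_nonneg: "0 \<le> Re (cinner x x)"
    and norm_eq_sqrt_cinner: "norm x = sqrt (Re (cinner x x))"

class chilbert_space = complex_inner + complete_space

instantiation complex :: chilbert_space
begin
definition cscale_complex :: "complex \<Rightarrow> complex \<Rightarrow> complex" where
  "cscale_complex a x = a * x"
definition cinner_complex :: "complex \<Rightarrow> complex \<Rightarrow> complex" where
  "cinner_complex x y = cnj x * y"
instance
proof
  fix x :: complex
  show "norm x = sqrt (Re (cinner x x))"
    by (simp add: cinner_complex_def cmod_def power2_eq_square)
qed (auto simp: cscale_complex_def cinner_complex_def algebra_simps scaleR_conv_of_real)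
end

definition bounded_op :: "('a::complex_inner \<Rightarrow> 'a) \<Rightarrow> bool" where
  "bounded_op T \<longleftrightarrow> bounded_linear T \<and> (\<forall>c x. T (cscale c x) = cscale c (T x))"

definition is_adjoint :: "('a::complex_inner \<Rightarrow> 'a) \<Rightarrow> ('a \<Rightarrow> 'a) \<Rightarrow> bool" where
  "is_adjoint T S \<longleftrightarrow> (\<forall>x y. cinner (T x) y = cinner x (S y))"

definition ker_op :: "('a::complex_inner \<Rightarrow> 'a) \<Rightarrow> 'a set" where
  "ker_op T = {x. T x = 0}"

definition orth_projection :: "('a::complex_inner \<Rightarrow> 'a) \<Rightarrow> bool" where
  "orth_projection P \<longleftrightarrow> bounded_op P \<and> P \<circ> P = P \<and> is_adjoint P P"

text \<open>The map \<phi>_A(X) = \<Sum>_{i\<in>I} A_i X A_i^*, the sum taken pointwise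
  (strong operator topology, unconditional convergence). The index set I is any
  subset of the naturals (finite: n \<in> \<nat>; infinite: n = \<infinity>).\<close>
definition phiA :: "(nat \<Rightarrow> 'a::complex_inner \<Rightarrow> 'a) \<Rightarrow> (nat \<Rightarrow> 'a \<Rightarrow> 'a) \<Rightarrow> nat set
    \<Rightarrow> ('a \<Rightarrow> 'a) \<Rightarrow> ('a \<Rightarrow> 'a)" where
  "phiA A As I X = (\<lambda>x. infsum (\<lambda>i. A i (X (As i x))) I)"

end

theory Submission
  imports Defs
begin

text \<open>The iterates \<open>X\<^sub>k = \<phi>\<^sub>A\<^sup>k(I)\<close> form a decreasing sequence of positive contractions,
  so they converge strongly to a positive contraction \<open>D\<close>. Fixed vectors and null vectors of
  the self-adjoint \<open>D\<close> are orthogonal, and the orthogonal projections onto these two subspaces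
  arise as strong limits of the powers of \<open>D\<close> and of \<open>I - D\<close>. Since
  \<open>\<langle>x, X\<^sub>k\<^sub>+\<^sub>1 x\<rangle> = \<Sum>\<^sub>i \<langle>A\<^sub>i\<^sup>* x, X\<^sub>k A\<^sub>i\<^sup>* x\<rangle>\<close> has nonnegative terms,
  \<open>D x = 0\<close> forces \<open>D A\<^sub>i\<^sup>* x = 0\<close>. If \<open>D x = x\<close>, comparing that sum termwise with
  \<open>\<Sum>\<^sub>i \<parallel>A\<^sub>i\<^sup>* x\<parallel>\<^sup>2 = \<langle>x, \<phi>\<^sub>A(I) x\<rangle> \<le> \<parallel>x\<parallel>\<^sup>2\<close> gives
  \<open>\<langle>A\<^sub>i\<^sup>* x, D A\<^sub>i\<^sup>* x\<rangle> = \<parallel>A\<^sub>i\<^sup>* x\<parallel>\<^sup>2\<close>, i.e. \<open>D A\<^sub>i\<^sup>* x = A\<^sub>i\<^sup>* x\<close>. When \<open>D\<close> is a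
  projection the two subspaces are orthogonal complements of each other, so their invariance
  under \<open>A\<^sub>i\<^sup>*\<close> passes to \<open>A\<^sub>i\<close>. That \<open>\<phi>\<^sub>A(X)\<close> is a bounded operator at all
  follows from the uniform boundedness principle.\<close>

lemma cinner_add_left: "cinner (x + y) z = cinner x z + cinner y z"
  by (metis cinner_commute cinner_add_right complex_cnj_add)

lemma cinner_zero_right [simp]: "cinner x 0 = 0"
  using cinner_add_right [of x 0 0] by simp

lemma cinner_zero_left [simp]: "cinner 0 x = 0"
  using cinner_add_left [of 0 0 x] by simp

lemma cinner_minus_right: "cinner x (- y) = - cinner x y"
  using cinner_add_right [of x y "- y"] by (simp add: minus_unique)

lemma cinner_minus_left: "cinner (- x) y = - cinner x y"
  using cinner_add_left [of x "- x" y] by (simp add: minus_unique)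

lemma cinner_diff_right: "cinner x (y - z) = cinner x y - cinner x z"
  using cinner_add_right [of x y "- z"] by (simp add: cinner_minus_right)

lemma cinner_diff_left: "cinner (x - y) z = cinner x z - cinner y z"
  using cinner_add_left [of x "- y" z] by (simp add: cinner_minus_left)

lemma cinner_cscale_left: "cinner (cscale a x) y = cnj a * cinner x y"
  by (metis cinner_commute cinner_cscale_right complex_cnj_mult)

lemma cinner_scaleR_right: "cinner x (r *\<^sub>R y) = of_real r * cinner x y"
  by (metis cscale_of_real cinner_cscale_right)

lemma cinner_scaleR_left: "cinner (r *\<^sub>R x) y = of_real r * cinner x y"
  by (metis cscale_of_real cinner_cscale_left complex_cnj_complex_of_real)

lemma cinner_self_real: "cinner x x = of_real (Re (cinner x x))"
  by (metis Reals_cnj_iff Reals_def cinner_commute complex_is_Real_iff of_real_Re)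

lemma power2_norm_eq_cinner: "(norm x)\<^sup>2 = Re (cinner x x)"
  by (simp add: norm_eq_sqrt_cinner cinner_nonneg)

lemma cinner_extensionality: "(\<And>z. cinner z u = cinner z v) \<Longrightarrow> u = v"
  by (metis cinner_diff_right cinner_eq_zero_iff right_minus_eq)

lemma cscale_zero_right [simp]: "cscale a 0 = 0"
  using cscale_add_right [of a 0 0] by simp

lemma cscale_minus_right: "cscale a (- x) = - cscale a x"
  using cscale_add_right [of a x "- x"] by (simp add: minus_unique)

lemma cscale_diff_right: "cscale a (x - y) = cscale a x - cscale a y"
  using cscale_add_right [of a x "- y"] by (simp add: cscale_minus_right)

lemma cscale_scaleR_commute: "cscale a (r *\<^sub>R x) = r *\<^sub>R cscale a x"
  by (metis cscale_of_real cscale_cscale mult.commute)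

lemma norm_cscale: "norm (cscale a x) = cmod a * norm x"
proof -
  have "cinner (cscale a x) (cscale a x) = (a * cnj a) * cinner x x"
    by (simp add: cinner_cscale_left cinner_cscale_right)
  also have "\<dots> = of_real ((cmod a)\<^sup>2 * Re (cinner x x))"
    by (metis cinner_self_real complex_norm_square of_real_mult)
  finally have "cinner (cscale a x) (cscale a x) = of_real ((cmod a)\<^sup>2 * Re (cinner x x))" .
  then have "(norm (cscale a x))\<^sup>2 = (cmod a * norm x)\<^sup>2"
    by (simp add: power2_norm_eq_cinner power_mult_distrib)
  then show ?thesis
    by (simp add: power2_eq_iff_nonneg)
qed

lemma bounded_linear_cscale: "bounded_linear (cscale a)"
  by (rule bounded_linear_intro [where K = "cmod a"])
    (auto simp: cscale_add_right cscale_scaleR_commute norm_cscale)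

lemma bounded_op_bounded_linear: "bounded_op E \<Longrightarrow> bounded_linear E"
  unfolding bounded_op_def by blast

lemma bounded_op_cscale: "bounded_op E \<Longrightarrow> E (cscale c x) = cscale c (E x)"
  unfolding bounded_op_def by blast

lemma bounded_op_add: "bounded_op E \<Longrightarrow> E (x + y) = E x + E y"
  by (metis bounded_op_bounded_linear bounded_linear.linear linear_add)

lemma bounded_op_diff: "bounded_op E \<Longrightarrow> E (x - y) = E x - E y"
  by (metis bounded_op_bounded_linear bounded_linear.linear linear_diff)

lemma bounded_op_0: "bounded_op E \<Longrightarrow> E 0 = 0"
  by (metis bounded_op_bounded_linear bounded_linear.linear linear_0)

lemma bounded_op_id: "bounded_op id"
  unfolding bounded_op_def by (simp add: bounded_linear_ident id_def)

lemma bounded_op_compose: "bounded_op E \<Longrightarrow> bounded_op F \<Longrightarrow> bounded_op (E \<circ> F)"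
  unfolding bounded_op_def o_def by (auto intro: bounded_linear_compose)

lemma bounded_op_sub: "bounded_op E \<Longrightarrow> bounded_op F \<Longrightarrow> bounded_op (E - F)"
  unfolding bounded_op_def fun_diff_def by (auto simp: cscale_diff_right intro: bounded_linear_sub)

lemma bounded_op_funpow: "bounded_op E \<Longrightarrow> bounded_op (E ^^ n)"
  by (induction n) (simp_all add: bounded_op_id bounded_op_compose)

lemma is_adjointD: "is_adjoint T S \<Longrightarrow> cinner (T x) y = cinner x (S y)"
  unfolding is_adjoint_def by blast

lemma is_adjointD': "is_adjoint T S \<Longrightarrow> cinner y (T x) = cinner (S y) x"
  by (metis cinner_commute is_adjointD)

section \<open>Positive operators\<close>

text \<open>Over \<complex> positivity of the quadratic form already forces self-adjointness; it is
  included here only so that it need not be derived.\<close>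

definition positive_op :: "('a::complex_inner \<Rightarrow> 'a) \<Rightarrow> bool" where
  "positive_op E \<longleftrightarrow> bounded_op E \<and> is_adjoint E E \<and> (\<forall>x. 0 \<le> Re (cinner x (E x)))"

lemma positive_opD:
  assumes "positive_op E"
  shows "bounded_op E" "is_adjoint E E" "0 \<le> Re (cinner x (E x))"
  using assms unfolding positive_op_def by auto

lemma positive_op_id: "positive_op id"
  unfolding positive_op_def is_adjoint_def by (simp add: bounded_op_id cinner_nonneg)

lemma le_mult_if_quadratic_nonneg:
  fixes P Q m :: real
  assumes quadratic: "\<And>t. 0 \<le> P - 2 * t * m + t\<^sup>2 * m * Q" and "0 \<le> Q"
  shows "m \<le> P * Q"
proof (cases "Q = 0")
  case True
  show ?thesis
  proof (rule ccontr)
    assume "\<not> m \<le> P * Q"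
    then have "m \<noteq> 0" using True by simp
    then have "P - 2 * ((P + 1) / (2 * m)) * m = - 1" by (simp add: field_simps)
    then show False using quadratic [of "(P + 1) / (2 * m)"] True by simp
  qed
next
  case False
  then have Q: "0 < Q" using \<open>0 \<le> Q\<close> by simp
  then have "P - 2 * (1 / Q) * m + (1 / Q)\<^sup>2 * m * Q = P - m / Q"
    by (simp add: field_simps power2_eq_square)
  then have "m / Q \<le> P"
    using quadratic [of "1 / Q"] by simp
  then show ?thesis
    using Q by (simp add: divide_le_eq mult.commute)
qed

lemma positive_op_Cauchy_Schwarz:
  assumes "positive_op E"
  shows "(cmod (cinner x (E y)))\<^sup>2 \<le> Re (cinner x (E x)) * Re (cinner y (E y))"
proof (rule le_mult_if_quadratic_nonneg)
  have E: "bounded_op E" and pos: "\<And>z. 0 \<le> Re (cinner z (E z))"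
    using positive_opD [OF assms] by auto
  have herm: "cinner u (E v) = cnj (cinner v (E u))" for u v
    by (metis cinner_commute is_adjointD' positive_opD(2) [OF assms])
  define a where "a = cinner x (E y)"
  fix t :: real
  define w where "w = x + cscale (- (of_real t * cnj a)) y"
  have "cinner w (E w) = cinner x (E x) - of_real (2 * t * (cmod a)\<^sup>2)
      + of_real (t\<^sup>2 * (cmod a)\<^sup>2) * cinner y (E y)"
  proof -
    have Ew: "E w = E x + cscale (- (of_real t * cnj a)) (E y)"
      by (simp add: w_def bounded_op_add [OF E] bounded_op_cscale [OF E])
    have "cinner w (E w) = cinner x (E x) - 2 * of_real t * (a * cnj a)
        + (of_real t)\<^sup>2 * (a * cnj a) * cinner y (E y)"
      unfolding Ew using herm [of y x]
      by (simp add: w_def a_def cinner_add_left cinner_add_right cinner_cscale_left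
          cinner_cscale_right algebra_simps power2_eq_square)
    then show ?thesis
      by (simp flip: complex_norm_square)
  qed
  then have "Re (cinner w (E w)) = Re (cinner x (E x)) - 2 * t * (cmod a)\<^sup>2
      + t\<^sup>2 * (cmod a)\<^sup>2 * Re (cinner y (E y))"
    by simp
  then show "0 \<le> Re (cinner x (E x)) - 2 * t * (cmod (cinner x (E y)))\<^sup>2
      + t\<^sup>2 * (cmod (cinner x (E y)))\<^sup>2 * Re (cinner y (E y))"
    using pos [of w] by (simp add: a_def)
  show "0 \<le> Re (cinner y (E y))" by (rule pos)
qed

lemma cinner_Cauchy_Schwarz: "cmod (cinner x y) \<le> norm x * norm y"
proof -
  have "(cmod (cinner x y))\<^sup>2 \<le> (norm x * norm y)\<^sup>2"
    using positive_op_Cauchy_Schwarz [OF positive_op_id, of x y]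
    by (simp add: power2_norm_eq_cinner power_mult_distrib)
  then show ?thesis by (simp add: power2_le_iff_abs_le)
qed

lemma Re_cinner_le_norm: "Re (cinner x y) \<le> norm x * norm y"
  using cinner_Cauchy_Schwarz complex_Re_le_cmod order_trans by blast

lemma bounded_linear_cinner_right: "bounded_linear (cinner y)"
proof (rule bounded_linear_intro [where K = "norm y"])
  show "norm (cinner y x) \<le> norm x * norm y" for x
    using cinner_Cauchy_Schwarz [of y x] by (simp add: mult.commute)
qed (auto simp: cinner_add_right cinner_scaleR_right scaleR_conv_of_real)

lemma bounded_linear_cinner_left: "bounded_linear (\<lambda>z. cinner z y)"
  by (rule bounded_linear_intro [where K = "norm y"])
    (auto simp: cinner_add_left cinner_scaleR_left scaleR_conv_of_real cinner_Cauchy_Schwarz)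

lemma bounded_op_adjoint:
  assumes T: "bounded_op T" and adj: "is_adjoint T S"
  shows "bounded_op S"
proof -
  have add: "S (x + y) = S x + S y" for x y
    by (rule cinner_extensionality) (simp add: is_adjointD [OF adj, symmetric] cinner_add_right)
  have cscale: "S (cscale c x) = cscale c (S x)" for c x
    by (rule cinner_extensionality) (simp add: is_adjointD [OF adj, symmetric] cinner_cscale_right)
  obtain K where "K > 0" and K: "\<And>x. norm (T x) \<le> norm x * K"
    using bounded_linear.pos_bounded [OF bounded_op_bounded_linear [OF T]] by blast
  have "norm (S y) \<le> norm y * K" for y
  proof -
    have "norm (S y) * norm (S y) = Re (cinner (T (S y)) y)"
      by (simp add: is_adjointD [OF adj] power2_norm_eq_cinner [symmetric] power2_eq_square)
    also have "\<dots> \<le> norm (S y) * (norm y * K)"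
      using Re_cinner_le_norm [of "T (S y)" y] K [of "S y"]
      by (metis mult.commute mult.left_commute mult_left_mono norm_ge_zero order_trans)
    finally show ?thesis
      using \<open>K > 0\<close> mult_le_cancel_left_pos [of "norm (S y)"]
      by (smt (verit) norm_ge_zero zero_le_mult_iff)
  qed
  moreover have "S (r *\<^sub>R x) = r *\<^sub>R S x" for r x
    by (metis cscale cscale_of_real)
  ultimately have "bounded_linear S"
    by (intro bounded_linear_intro [where K = K] add)
  then show ?thesis
    unfolding bounded_op_def using cscale by blast
qed

lemma positive_op_eq_0_if_Re_cinner_eq_0:
  assumes "positive_op E" and "Re (cinner y (E y)) = 0"
  shows "E y = 0"
  using positive_op_Cauchy_Schwarz [OF assms(1), of "E y" y] assms(2)
  by (simp add: cinner_eq_zero_iff)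

lemma positive_op_norm_sq_le:
  assumes "positive_op E" and bound: "\<And>z. norm (E z) \<le> C * norm z"
  shows "(norm (E x))\<^sup>2 \<le> C * Re (cinner x (E x))"
proof -
  define n where "n = norm (E x)"
  have "cmod (cinner (E x) (E x)) = n\<^sup>2"
    by (metis n_def cinner_self_real norm_of_real power2_norm_eq_cinner abs_power2)
  then have "n\<^sup>2 * n\<^sup>2 \<le> Re (cinner (E x) (E (E x))) * Re (cinner x (E x))"
    using positive_op_Cauchy_Schwarz [OF assms(1), of "E x" x] by (simp add: power2_eq_square)
  also have "\<dots> \<le> n\<^sup>2 * C * Re (cinner x (E x))"
  proof (rule mult_right_mono)
    have "Re (cinner (E x) (E (E x))) \<le> n * norm (E (E x))"
      unfolding n_def by (rule Re_cinner_le_norm)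
    also have "\<dots> \<le> n\<^sup>2 * C"
      using mult_left_mono [OF bound [of "E x"], of n]
      by (simp add: n_def power2_eq_square mult_ac)
    finally show "Re (cinner (E x) (E (E x))) \<le> n\<^sup>2 * C" .
  qed (rule positive_opD(3) [OF assms(1)])
  finally have "n\<^sup>2 * n\<^sup>2 \<le> n\<^sup>2 * (C * Re (cinner x (E x)))"
    by (simp add: mult.assoc)
  then show ?thesis
    unfolding mult_le_cancel_left by (cases "E x = 0") (simp_all add: n_def)
qed

lemma Re_cinner_le_if_contraction:
  assumes "\<And>z. norm (E z) \<le> norm z"
  shows "Re (cinner y (E y)) \<le> Re (cinner y y)"
proof -
  have "Re (cinner y (E y)) \<le> norm y * norm (E y)"
    by (rule Re_cinner_le_norm)
  also have "\<dots> \<le> norm y * norm y"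
    by (simp add: assms mult_left_mono)
  finally show ?thesis
    by (simp add: power2_norm_eq_cinner [symmetric] power2_eq_square)
qed

lemma positive_op_sub:
  assumes "positive_op E" "positive_op F" "\<And>z. Re (cinner z (F z)) \<le> Re (cinner z (E z))"
  shows "positive_op (E - F)"
  using assms unfolding positive_op_def is_adjoint_def
  by (auto simp: bounded_op_sub cinner_diff_left cinner_diff_right)

lemma positive_contraction_complement:
  assumes E: "positive_op E" and contraction: "\<And>z. norm (E z) \<le> norm z"
  shows "positive_op (id - E)" and "norm ((id - E) z) \<le> norm z"
proof -
  show "positive_op (id - E)"
    by (rule positive_op_sub [OF positive_op_id E])
      (use Re_cinner_le_if_contraction [OF contraction] in simp)
  have "cinner (E z) z = cinner z (E z)"
    by (rule is_adjointD [OF positive_opD(2) [OF E]])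
  then have "(norm (z - E z))\<^sup>2
      = Re (cinner z z) - 2 * Re (cinner z (E z)) + (norm (E z))\<^sup>2"
    by (simp add: power2_norm_eq_cinner cinner_diff_left cinner_diff_right)
  also have "\<dots> \<le> (norm z)\<^sup>2"
  proof -
    have "(norm (E z))\<^sup>2 \<le> Re (cinner z (E z))"
      using positive_op_norm_sq_le [OF E, of 1 z] contraction by simp
    then show ?thesis
      using positive_opD(3) [OF E, of z] by (simp add: power2_norm_eq_cinner)
  qed
  finally show "norm ((id - E) z) \<le> norm z"
    using power2_le_imp_le by simp
qed

section \<open>Strong limits of positive contractions\<close>

lemma Cauchy_if_norm_sq_le_Cauchy:
  fixes f :: "nat \<Rightarrow> 'a::real_normed_vector" and q :: "nat \<Rightarrow> real"
  assumes "Cauchy q" and bound: "\<And>m n. (norm (f m - f n))\<^sup>2 \<le> \<bar>q m - q n\<bar>"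
  shows "Cauchy f"
proof (rule CauchyI)
  fix e :: real
  assume "0 < e"
  then obtain M where M: "\<forall>m\<ge>M. \<forall>n\<ge>M. norm (q m - q n) < e\<^sup>2"
    using CauchyD [OF \<open>Cauchy q\<close>, of "e\<^sup>2"] by auto
  have "norm (f m - f n) < e" if "m \<ge> M" "n \<ge> M" for m n
  proof -
    have "(norm (f m - f n))\<^sup>2 < e\<^sup>2"
      using bound [of m n] M that by fastforce
    then show ?thesis
      using \<open>0 < e\<close> by (simp add: power_less_imp_less_base)
  qed
  then show "\<exists>M. \<forall>m\<ge>M. \<forall>n\<ge>M. norm (f m - f n) < e"
    by blast
qed

lemma strong_limit_positive_contraction:
  fixes Y :: "nat \<Rightarrow> 'a::complex_inner \<Rightarrow> 'a"
  assumes Y: "\<And>k. positive_op (Y k)" and contraction: "\<And>k z. norm (Y k z) \<le> norm z"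
    and lim: "\<And>x. (\<lambda>k. Y k x) \<longlonglongrightarrow> L x"
  shows "positive_op L" and "norm (L z) \<le> norm z"
proof -
  have Y_bounded: "bounded_op (Y k)" for k
    using positive_opD(1) [OF Y] .
  have add: "L (x + y) = L x + L y" for x y
  proof (rule LIMSEQ_unique [OF lim])
    show "(\<lambda>k. Y k (x + y)) \<longlonglongrightarrow> L x + L y"
      using tendsto_add [OF lim [of x] lim [of y]] by (simp add: bounded_op_add [OF Y_bounded])
  qed
  have cscale: "L (cscale c x) = cscale c (L x)" for c x
  proof (rule LIMSEQ_unique [OF lim])
    show "(\<lambda>k. Y k (cscale c x)) \<longlonglongrightarrow> cscale c (L x)"
      using bounded_linear.tendsto [OF bounded_linear_cscale lim [of x]]
      by (simp add: bounded_op_cscale [OF Y_bounded])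
  qed
  show norm_L: "norm (L z) \<le> norm z" for z
    by (rule LIMSEQ_le_const2 [OF tendsto_norm [OF lim]]) (use contraction in auto)
  have "bounded_linear L"
  proof (rule bounded_linear_intro [where K = 1])
    show "L (r *\<^sub>R x) = r *\<^sub>R L x" for r x
      by (metis cscale cscale_of_real)
  qed (simp_all add: add norm_L)
  then have "bounded_op L"
    unfolding bounded_op_def using cscale by blast
  moreover have "is_adjoint L L"
    unfolding is_adjoint_def
  proof (intro allI)
    fix x y
    have "(\<lambda>k. cinner (Y k x) y) \<longlonglongrightarrow> cinner (L x) y"
      by (rule bounded_linear.tendsto [OF bounded_linear_cinner_left lim])
    moreover have "(\<lambda>k. cinner (Y k x) y) \<longlonglongrightarrow> cinner x (L y)"
      using bounded_linear.tendsto [OF bounded_linear_cinner_right lim [of y], of x]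
      by (simp add: is_adjointD [OF positive_opD(2) [OF Y]])
    ultimately show "cinner (L x) y = cinner x (L y)"
      using LIMSEQ_unique by blast
  qed
  moreover have "0 \<le> Re (cinner z (L z))" for z
    by (rule LIMSEQ_le_const [OF tendsto_Re [OF bounded_linear.tendsto
          [OF bounded_linear_cinner_right lim]]]) (use positive_opD(3) [OF Y] in auto)
  ultimately show "positive_op L"
    unfolding positive_op_def by blast
qed

lemma decreasing_positive_contractions_converge:
  fixes Y :: "nat \<Rightarrow> 'a::chilbert_space \<Rightarrow> 'a"
  assumes Y: "\<And>k. positive_op (Y k)" and contraction: "\<And>k z. norm (Y k z) \<le> norm z"
    and decreasing: "\<And>k z. Re (cinner z (Y (Suc k) z)) \<le> Re (cinner z (Y k z))"
  shows "convergent (\<lambda>k. Y k x)"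
proof -
  define q where "q x k = Re (cinner x (Y k x))" for x k
  have q_decseq: "decseq (q x)" for x
    unfolding q_def by (rule decseq_SucI) (rule decreasing)
  then have q_mono: "q x m \<le> q x k" if "k \<le> m" for x k m
    using decseqD that by blast
  have "convergent (q x)" for x
  proof -
    have "\<forall>k. 0 \<le> q x k"
      unfolding q_def using positive_opD(3) [OF Y] by blast
    then obtain l where "q x \<longlonglongrightarrow> l"
      using decseq_convergent [OF q_decseq] by blast
    then show ?thesis
      by (rule convergentI)
  qed
  then have q_Cauchy: "Cauchy (\<lambda>k. 2 * q x k)" for x
    by (simp add: Cauchy_convergent_iff convergent_mult_const_iff)
  have norm_diff: "(norm (Y k x - Y m x))\<^sup>2 \<le> 2 * (q x k - q x m)" if "k \<le> m" for k m x
  proof -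
    have "positive_op (Y k - Y m)"
      by (rule positive_op_sub [OF Y Y]) (use q_mono [OF that] in \<open>simp add: q_def\<close>)
    moreover have "norm ((Y k - Y m) z) \<le> 2 * norm z" for z
      using norm_triangle_ineq4 [of "Y k z" "Y m z"] contraction [of k z] contraction [of m z]
      by simp
    ultimately have "(norm ((Y k - Y m) x))\<^sup>2 \<le> 2 * Re (cinner x ((Y k - Y m) x))"
      by (rule positive_op_norm_sq_le)
    then show ?thesis
      by (simp add: q_def cinner_diff_right)
  qed
  have "Cauchy (\<lambda>k. Y k x)"
  proof (rule Cauchy_if_norm_sq_le_Cauchy [OF q_Cauchy [of x]])
    show "(norm (Y k x - Y m x))\<^sup>2 \<le> \<bar>2 * q x k - 2 * q x m\<bar>" for k m
    proof (cases "k \<le> m")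
      case True
      then show ?thesis
        using norm_diff [of k m x] by simp
    next
      case False
      then show ?thesis
        using norm_diff [of m k x] by (simp add: norm_minus_commute)
    qed
  qed
  then show ?thesis
    by (rule Cauchy_convergent)
qed

lemma self_adjoint_funpow_cinner:
  assumes "is_adjoint E E"
  shows "cinner x ((E ^^ (p + r)) y) = cinner ((E ^^ p) x) ((E ^^ r) y)"
proof (induction p arbitrary: x)
  case (Suc p)
  have "cinner x ((E ^^ (Suc p + r)) y) = cinner (E x) ((E ^^ (p + r)) y)"
    by (simp add: is_adjointD [OF assms])
  also have "\<dots> = cinner ((E ^^ Suc p) x) ((E ^^ r) y)"
    by (simp only: Suc.IH funpow_Suc_right o_apply)
  finally show ?case .
qed simp

lemma self_adjoint_funpow_even_odd:
  assumes "is_adjoint E E"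
  shows "cinner x ((E ^^ (2 * j)) x) = cinner ((E ^^ j) x) ((E ^^ j) x)"
    and "cinner x ((E ^^ Suc (2 * j)) x) = cinner ((E ^^ j) x) (E ((E ^^ j) x))"
  using self_adjoint_funpow_cinner [OF assms, of x j j x]
    self_adjoint_funpow_cinner [OF assms, of x j "Suc j" x]
  by (simp_all add: mult_2)

lemma positive_op_funpow:
  assumes E: "positive_op E"
  shows "positive_op (E ^^ n)"
proof -
  have adj: "is_adjoint E E"
    using positive_opD(2) [OF E] .
  have "0 \<le> Re (cinner x ((E ^^ n) x))" for x
  proof (cases "even n")
    case True
    then obtain j where n: "n = 2 * j" by (rule evenE)
    show ?thesis
      unfolding n self_adjoint_funpow_even_odd(1) [OF adj] by (rule cinner_nonneg)
  next
    case False
    then obtain j where n: "n = Suc (2 * j)" by (rule oddE) simp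
    show ?thesis
      unfolding n self_adjoint_funpow_even_odd(2) [OF adj] by (rule positive_opD(3) [OF E])
  qed
  moreover have "is_adjoint (E ^^ n) (E ^^ n)"
    unfolding is_adjoint_def using self_adjoint_funpow_cinner [OF adj, where r = 0] by simp
  ultimately show ?thesis
    unfolding positive_op_def using bounded_op_funpow [OF positive_opD(1) [OF E]] by blast
qed

lemma positive_contraction_funpow_decreasing:
  assumes E: "positive_op E" and contraction: "\<And>z. norm (E z) \<le> norm z"
  shows "Re (cinner x ((E ^^ Suc n) x)) \<le> Re (cinner x ((E ^^ n) x))"
proof -
  have adj: "is_adjoint E E"
    using positive_opD(2) [OF E] .
  show ?thesis
  proof (cases "even n")
    case True
    then obtain j where n: "n = 2 * j" by (rule evenE)
    show ?thesis
      unfolding n self_adjoint_funpow_even_odd [OF adj]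
      by (rule Re_cinner_le_if_contraction [OF contraction])
  next
    case False
    then obtain j where n: "n = Suc (2 * j)" by (rule oddE) simp
    then have "Suc n = 2 * Suc j"
      by simp
    then have "Re (cinner x ((E ^^ Suc n) x)) = (norm (E ((E ^^ j) x)))\<^sup>2"
      by (simp only: self_adjoint_funpow_even_odd(1) [OF adj])
        (simp add: power2_norm_eq_cinner)
    also have "\<dots> \<le> Re (cinner ((E ^^ j) x) (E ((E ^^ j) x)))"
      using positive_op_norm_sq_le [OF E, of 1 "(E ^^ j) x"] contraction by simp
    also have "\<dots> = Re (cinner x ((E ^^ n) x))"
      unfolding n self_adjoint_funpow_even_odd(2) [OF adj] ..
    finally show ?thesis .
  qed
qed

lemma contraction_funpow:
  fixes E :: "'a::real_normed_vector \<Rightarrow> 'a"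
  assumes "\<And>z. norm (E z) \<le> norm z"
  shows "norm ((E ^^ n) z) \<le> norm z"
proof (induction n)
  case (Suc n)
  then show ?case
    using assms [of "(E ^^ n) z"] by simp
qed simp

lemma positive_contraction_powers_limit:
  fixes E :: "'a::chilbert_space \<Rightarrow> 'a"
  assumes E: "positive_op E" and contraction: "\<And>z. norm (E z) \<le> norm z"
  obtains P where "positive_op P" and "\<And>x. E (P x) = P x"
    and "\<And>y. E y = y \<Longrightarrow> P y = y" and "\<And>y. E y = 0 \<Longrightarrow> P y = 0"
proof -
  have E_bounded: "bounded_op E"
    using positive_opD(1) [OF E] .
  note contractions = contraction_funpow [OF contraction]
  define P where "P x = lim (\<lambda>n. (E ^^ n) x)" for x
  have lim: "(\<lambda>n. (E ^^ n) x) \<longlonglongrightarrow> P x" for x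
    unfolding P_def convergent_LIMSEQ_iff [symmetric]
    by (rule decreasing_positive_contractions_converge [where Y = "\<lambda>n. E ^^ n",
          OF positive_op_funpow [OF E] contractions
          positive_contraction_funpow_decreasing [OF E contraction]])
  have P: "positive_op P"
    by (rule strong_limit_positive_contraction(1) [where Y = "\<lambda>n. E ^^ n",
          OF positive_op_funpow [OF E] contractions lim])
  show ?thesis
  proof
    show "positive_op P" by (rule P)
    show "E (P x) = P x" for x
    proof (rule LIMSEQ_unique)
      show "(\<lambda>n. E ((E ^^ n) x)) \<longlonglongrightarrow> E (P x)"
        by (rule bounded_linear.tendsto [OF bounded_op_bounded_linear [OF E_bounded] lim])
      show "(\<lambda>n. E ((E ^^ n) x)) \<longlonglongrightarrow> P x"
        using LIMSEQ_Suc [OF lim [of x]] by simp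
    qed
    show "P y = y" if "E y = y" for y
    proof -
      have "(E ^^ n) y = y" for n
        by (induction n) (simp_all add: that)
      then show ?thesis
        using LIMSEQ_unique [OF lim [of y]] by simp
    qed
    show "P y = 0" if "E y = 0" for y
    proof -
      have "(E ^^ Suc n) y = 0" for n
        using that bounded_op_0 [OF bounded_op_funpow [OF E_bounded, of n]]
        by (simp only: funpow_Suc_right o_apply)
      then show ?thesis
        using LIMSEQ_unique [OF LIMSEQ_Suc [OF lim [of y]]] by simp
    qed
  qed
qed

section \<open>Fixed spaces, kernels and orthogonal projections\<close>

lemma mem_ker_op_iff [simp]: "x \<in> ker_op T \<longleftrightarrow> T x = 0"
  unfolding ker_op_def by simp

lemma mem_ker_op_id_diff_iff [simp]: "x \<in> ker_op (id - T) \<longleftrightarrow> T x = x"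
  unfolding ker_op_def by (auto simp: fun_diff_def)

lemma self_adjoint_fixed_orthogonal_kernel:
  assumes "is_adjoint D D" and "x \<in> ker_op (id - D)" and "y \<in> ker_op D"
  shows "cinner x y = 0"
  using assms(2,3) is_adjointD [OF assms(1), of x y] by simp

lemma positive_contraction_orthogonal_decomposition:
  fixes D :: "'a::chilbert_space \<Rightarrow> 'a"
  assumes D: "positive_op D" and contraction: "\<And>z. norm (D z) \<le> norm z"
  shows "\<exists>m a b. x = m + a + b \<and> a \<in> ker_op (id - D) \<and> b \<in> ker_op D
    \<and> (\<forall>y\<in>ker_op (id - D) \<union> ker_op D. cinner m y = 0)"
proof -
  \<comment> \<open>the orthogonal projections onto the fixed space and onto the kernel of \<open>D\<close>\<close>
  obtain P1 where P1: "positive_op P1" "\<And>x. D (P1 x) = P1 x"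
      "\<And>y. D y = y \<Longrightarrow> P1 y = y" "\<And>y. D y = 0 \<Longrightarrow> P1 y = 0"
    using positive_contraction_powers_limit [OF D contraction] by blast
  obtain P0 where P0: "positive_op P0" "\<And>x. (id - D) (P0 x) = P0 x"
      "\<And>y. (id - D) y = y \<Longrightarrow> P0 y = y" "\<And>y. (id - D) y = 0 \<Longrightarrow> P0 y = 0"
    using positive_contraction_powers_limit [OF positive_contraction_complement [OF D contraction]]
    by blast
  have "cinner (x - P1 x - P0 x) y = 0" if "D y = y \<or> D y = 0" for y
  proof -
    have "P1 y + P0 y = y"
      using that P1(3,4) [of y] P0(3,4) [of y] by auto
    moreover have "cinner (x - P1 x - P0 x) y = cinner x (y - P1 y - P0 y)"
      by (simp add: cinner_diff_left cinner_diff_right is_adjointD [OF positive_opD(2) [OF P1(1)]]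
          is_adjointD [OF positive_opD(2) [OF P0(1)]])
    ultimately show ?thesis
      by (simp add: diff_diff_eq)
  qed
  moreover have "D (P0 x) = 0"
    using P0(2) [of x] by simp
  ultimately show ?thesis
    using P1(2) [of x]
    by (intro exI [of _ "x - P1 x - P0 x"] exI [of _ "P1 x"] exI [of _ "P0 x"]) auto
qed

lemma orth_projection_decomposition:
  assumes "orth_projection D"
  shows "\<exists>a b. x = a + b \<and> a \<in> ker_op (id - D) \<and> b \<in> ker_op D"
proof (intro exI conjI)
  have "D (D x) = D x"
    using assms unfolding orth_projection_def by (metis comp_apply)
  then show "D x \<in> ker_op (id - D)" and "x - D x \<in> ker_op D"
    using assms unfolding orth_projection_def by (simp_all add: bounded_op_diff)
qed simp

text \<open>The range and the kernel of an orthogonal projection are each other's orthogonal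
  complements, so invariance of both under \<open>S\<close> transfers to its adjoint \<open>T\<close>.\<close>

lemma orth_projection_fixed_invariant_if_adjoint_kernel_invariant:
  assumes D: "orth_projection D" and adj: "is_adjoint T S"
    and S_ker: "S ` ker_op D \<subseteq> ker_op D"
  shows "T ` ker_op (id - D) \<subseteq> ker_op (id - D)"
proof (rule image_subsetI)
  fix a
  assume a: "a \<in> ker_op (id - D)"
  have D_bounded: "bounded_op D" and D_idem: "\<And>x. D (D x) = D x" and D_adj: "is_adjoint D D"
    using D unfolding orth_projection_def by (auto simp: fun_eq_iff)
  define w where "w = T a - D (T a)"
  have "w \<in> ker_op D"
    by (simp add: w_def bounded_op_diff [OF D_bounded] D_idem)
  have "cinner w w = cinner (T a) w - cinner (D (T a)) w"
    by (simp add: w_def cinner_diff_left)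
  also have "cinner (T a) w = 0"
  proof -
    have "S w \<in> ker_op D"
      using S_ker \<open>w \<in> ker_op D\<close> by blast
    then show ?thesis
      using self_adjoint_fixed_orthogonal_kernel [OF D_adj a] by (simp add: is_adjointD [OF adj])
  qed
  also have "cinner (D (T a)) w = 0"
    using \<open>w \<in> ker_op D\<close> by (simp add: is_adjointD [OF D_adj])
  finally have "w = 0"
    by (simp add: cinner_eq_zero_iff)
  then show "T a \<in> ker_op (id - D)"
    by (simp add: w_def)
qed

lemma orth_projection_kernel_invariant_if_adjoint_fixed_invariant:
  assumes D: "orth_projection D" and adj: "is_adjoint T S"
    and S_fixed: "S ` ker_op (id - D) \<subseteq> ker_op (id - D)"
  shows "T ` ker_op D \<subseteq> ker_op D"
proof (rule image_subsetI)
  fix b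
  assume b: "b \<in> ker_op D"
  have D_idem: "\<And>x. D (D x) = D x" and D_adj: "is_adjoint D D"
    using D unfolding orth_projection_def by (auto simp: fun_eq_iff)
  have "D (T b) \<in> ker_op (id - D)"
    by (simp add: D_idem)
  then have "S (D (T b)) \<in> ker_op (id - D)"
    using S_fixed by blast
  have "cinner (D (T b)) (D (T b)) = cinner b (S (D (T b)))"
    by (simp add: is_adjointD [OF D_adj] D_idem is_adjointD [OF adj])
  also have "\<dots> = cnj (cinner (S (D (T b))) b)"
    by (rule cinner_commute)
  also have "cinner (S (D (T b))) b = 0"
    by (rule self_adjoint_fixed_orthogonal_kernel [OF D_adj \<open>S (D (T b)) \<in> ker_op (id - D)\<close> b])
  finally show "T b \<in> ker_op D"
    by (simp add: cinner_eq_zero_iff)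
qed

section \<open>Uniform boundedness and unconditional sums of operators\<close>

lemma Baire_closed_cover_nonempty_interior:
  fixes F :: "nat \<Rightarrow> 'a::complete_space set"
  assumes closed: "\<And>n. closed (F n)" and cover: "(\<Union>n. F n) = UNIV"
  obtains n where "interior (F n) \<noteq> {}"
proof -
  have "\<exists>n. interior (F n) \<noteq> {}"
  proof (rule ccontr)
    assume "\<nexists>n. interior (F n) \<noteq> {}"
    then have "euclidean interior_of \<Union>(range F) = {}"
      using closed by (intro Baire_category_alt) (auto simp: completely_metrizable_space_euclidean)
    then show False
      using cover by simp
  qed
  then show ?thesis
    using that by blast
qed

lemma linear_norm_le_if_bounded_on_ball:
  assumes "linear f" and "e > 0" and small: "\<And>z. norm z < e \<Longrightarrow> norm (f z) \<le> M"
  shows "norm (f y) \<le> (2 * M / e) * norm y"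
proof (cases "y = 0")
  case True
  then show ?thesis
    by (simp add: linear_0 [OF \<open>linear f\<close>])
next
  case False
  define c where "c = e / 2 / norm y"
  have "norm (c *\<^sub>R y) < e"
    using False \<open>e > 0\<close> by (simp add: c_def)
  then have "c * norm (f y) \<le> M"
    using small [of "c *\<^sub>R y"] False \<open>e > 0\<close> by (simp add: c_def linear_scale [OF \<open>linear f\<close>])
  have "norm (f y) = (2 * norm y / e) * (c * norm (f y))"
    using False \<open>e > 0\<close> by (simp add: c_def)
  also have "\<dots> \<le> (2 * norm y / e) * M"
    by (rule mult_left_mono) (use \<open>c * norm (f y) \<le> M\<close> \<open>e > 0\<close> in simp_all)
  finally show ?thesis
    by (simp add: field_simps)
qed

lemma uniform_boundedness:
  fixes S :: "'i \<Rightarrow> 'a::{real_normed_vector,complete_space} \<Rightarrow> 'b::real_normed_vector"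
  assumes linear: "\<And>j. bounded_linear (S j)" and pointwise: "\<And>x. \<exists>B. \<forall>j. norm (S j x) \<le> B"
  obtains C where "\<And>j x. norm (S j x) \<le> C * norm x"
proof -
  define F where "F n = {x. \<forall>j. norm (S j x) \<le> real n}" for n :: nat
  have "closed (F n)" for n
    unfolding F_def
    by (intro closed_Collect_all closed_Collect_le continuous_on_norm continuous_on_const
        linear_continuous_on linear)
  moreover have "(\<Union>n. F n) = UNIV"
  proof -
    have "x \<in> F (nat \<lceil>B\<rceil>)" if "\<forall>j. norm (S j x) \<le> B" for x B
      using that order_trans [OF _ real_nat_ceiling_ge] unfolding F_def by blast
    then have "x \<in> (\<Union>n. F n)" for x
      using pointwise [of x] by blast
    then show ?thesis
      by blast
  qed
  ultimately obtain n where "interior (F n) \<noteq> {}"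
    by (rule Baire_closed_cover_nonempty_interior)
  then obtain x0 where "x0 \<in> interior (F n)"
    by blast
  then obtain e where "e > 0" and ball: "ball x0 e \<subseteq> F n"
    unfolding mem_interior by blast
  \<comment> \<open>every \<open>z\<close> with \<open>\<parallel>z\<parallel> < e\<close> is a difference of two points of that ball\<close>
  have small: "norm (S j z) \<le> 2 * real n" if "norm z < e" for j z
  proof -
    have "x0 + z \<in> ball x0 e" and "x0 \<in> ball x0 e"
      using that \<open>e > 0\<close> by (simp_all add: dist_norm)
    then have "x0 + z \<in> F n" and "x0 \<in> F n"
      using ball by blast+
    then have "norm (S j (x0 + z)) \<le> real n" and "norm (S j x0) \<le> real n"
      unfolding F_def by blast+
    moreover have "S j z = S j (x0 + z) - S j x0"
      by (simp add: linear_add [OF bounded_linear.linear [OF linear]])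
    ultimately show ?thesis
      using norm_triangle_ineq4 [of "S j (x0 + z)" "S j x0"] by simp
  qed
  have "norm (S j y) \<le> (2 * (2 * real n) / e) * norm y" for j y
    by (rule linear_norm_le_if_bounded_on_ball [OF bounded_linear.linear [OF linear] \<open>e > 0\<close>
          small])
  then show ?thesis
    using that by blast
qed

lemma summable_on_finite_sums_bounded:
  fixes f :: "'i \<Rightarrow> 'b::real_normed_vector"
  assumes "f summable_on I"
  obtains B where "\<And>F. finite F \<Longrightarrow> F \<subseteq> I \<Longrightarrow> norm (sum f F) \<le> B"
proof -
  obtain s where "(f has_sum s) I"
    using assms unfolding summable_on_def by blast
  then have "eventually (\<lambda>F. dist (sum f F) s < 1) (finite_subsets_at_top I)"
    unfolding has_sum_def by (rule tendstoD) simp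
  then obtain X where X: "finite X" "X \<subseteq> I"
    and near: "\<And>Y. finite Y \<Longrightarrow> X \<subseteq> Y \<Longrightarrow> Y \<subseteq> I \<Longrightarrow> dist (sum f Y) s < 1"
    unfolding eventually_finite_subsets_at_top by metis
  have "norm (sum f F) \<le> norm s + 1 + (\<Sum>x\<in>X. norm (f x))" if F: "finite F" "F \<subseteq> I" for F
  proof -
    have "sum f (F \<union> (X - F)) = sum f F + sum f (X - F)"
      using F X by (intro sum.union_disjoint) auto
    then have "sum f F = sum f (F \<union> X) - sum f (X - F)"
      by (simp add: Un_Diff_cancel)
    moreover have "norm (sum f (F \<union> X)) \<le> norm s + 1"
      using near [of "F \<union> X"] F X norm_triangle_sub [of "sum f (F \<union> X)" s]
      by (simp add: dist_norm)
    moreover have "norm (sum f (X - F)) \<le> (\<Sum>x\<in>X. norm (f x))"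
      using norm_sum [of f "X - F"] sum_mono2 [OF X(1) Diff_subset, where f = "\<lambda>x. norm (f x)"]
      by (simp add: order_trans)
    ultimately show ?thesis
      using norm_triangle_ineq4 [of "sum f (F \<union> X)" "sum f (X - F)"] by simp
  qed
  then show ?thesis
    by (rule that)
qed

lemma infsum_bounded_linear:
  assumes "bounded_linear h" and "f summable_on A"
  shows "infsum (\<lambda>x. h (f x)) A = h (infsum f A)"
  by (rule infsumI [OF has_sum_bounded_linear [OF assms(1) has_sum_infsum [OF assms(2)]]])

lemma finite_partial_sums_uniformly_bounded:
  fixes f :: "'i \<Rightarrow> 'a::{real_normed_vector,complete_space} \<Rightarrow> 'b::real_normed_vector"
  assumes linear: "\<And>i. i \<in> I \<Longrightarrow> bounded_linear (f i)"
    and summable: "\<And>x. (\<lambda>i. f i x) summable_on I"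
  obtains C where "\<And>F x. finite F \<Longrightarrow> F \<subseteq> I \<Longrightarrow> norm (\<Sum>i\<in>F. f i x) \<le> C * norm x"
proof -
  define S where "S F x = (\<Sum>i\<in>F \<inter> I. f i x)" for F x
  have "bounded_linear (S F)" for F
    unfolding S_def by (rule bounded_linear_sum) (simp add: linear)
  moreover have "\<exists>B. \<forall>F. norm (S F x) \<le> B" for x
  proof -
    obtain B where B: "\<And>F. finite F \<Longrightarrow> F \<subseteq> I \<Longrightarrow> norm (\<Sum>i\<in>F. f i x) \<le> B"
      using summable_on_finite_sums_bounded [OF summable] by blast
    have "norm (S F x) \<le> B" for F
    proof (cases "finite (F \<inter> I)")
      case True
      then show ?thesis
        unfolding S_def by (intro B) auto
    next
      case False
      then show ?thesis
        using B [of "{}"] unfolding S_def by simp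
    qed
    then show ?thesis
      by blast
  qed
  ultimately obtain C where C: "\<And>F x. norm (S F x) \<le> C * norm x"
    by (rule uniform_boundedness) blast
  have "norm (\<Sum>i\<in>F. f i x) \<le> C * norm x" if "finite F" "F \<subseteq> I" for F x
    using C [of F x] that unfolding S_def by (simp add: Int_absorb2)
  then show ?thesis
    by (rule that)
qed

lemma bounded_linear_infsum:
  fixes f :: "'i \<Rightarrow> 'a::{real_normed_vector,complete_space} \<Rightarrow> 'b::real_normed_vector"
  assumes linear: "\<And>i. i \<in> I \<Longrightarrow> bounded_linear (f i)"
    and summable: "\<And>x. (\<lambda>i. f i x) summable_on I"
  shows "bounded_linear (\<lambda>x. infsum (\<lambda>i. f i x) I)"
proof -
  obtain C where C: "\<And>F x. finite F \<Longrightarrow> F \<subseteq> I \<Longrightarrow> norm (\<Sum>i\<in>F. f i x) \<le> C * norm x"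
    using finite_partial_sums_uniformly_bounded [OF linear summable] by blast
  have f_linear: "i \<in> I \<Longrightarrow> linear (f i)" for i
    by (rule bounded_linear.linear [OF linear])
  show ?thesis
  proof (rule bounded_linear_intro [where K = C])
    show "infsum (\<lambda>i. f i (x + y)) I = infsum (\<lambda>i. f i x) I + infsum (\<lambda>i. f i y) I" for x y
      by (subst infsum_add [OF summable summable, symmetric])
        (rule infsum_cong, simp add: linear_add [OF f_linear])
    show "infsum (\<lambda>i. f i (r *\<^sub>R x)) I = r *\<^sub>R infsum (\<lambda>i. f i x) I" for r x
      by (subst infsum_scaleR_right [symmetric])
        (rule infsum_cong, simp add: linear_scale [OF f_linear])
    show "norm (infsum (\<lambda>i. f i x) I) \<le> norm x * C" for x
    proof -
      have "eventually (\<lambda>F. norm (\<Sum>i\<in>F. f i x) \<le> C * norm x) (finite_subsets_at_top I)"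
        using C by (intro eventually_finite_subsets_at_top_weakI)
      moreover have "(sum (\<lambda>i. f i x) \<longlongrightarrow> infsum (\<lambda>i. f i x) I) (finite_subsets_at_top I)"
        using has_sum_infsum [OF summable] unfolding has_sum_def .
      ultimately have "norm (infsum (\<lambda>i. f i x) I) \<le> C * norm x"
        by (intro Lim_norm_ubound [OF finite_subsets_at_top_neq_bot])
      then show ?thesis
        by (simp add: mult.commute)
    qed
  qed
qed

lemma le_term_if_infsum_le:
  fixes a b :: "'i \<Rightarrow> real"
  assumes a: "a summable_on I" and b: "b summable_on I"
    and termwise: "\<And>i. i \<in> I \<Longrightarrow> b i \<le> a i" and sums: "infsum a I \<le> infsum b I"
    and "j \<in> I"
  shows "a j \<le> b j"
proof -
  have "((\<lambda>i. a i + - b i) has_sum (infsum a I + - infsum b I)) I"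
    by (intro has_sum_add has_sum_infsum a) (simp add: has_sum_uminus has_sum_infsum b)
  then have "((\<lambda>i. a i - b i) has_sum (infsum a I - infsum b I)) I"
    by simp
  then have "sum (\<lambda>i. a i - b i) {j} \<le> infsum a I - infsum b I"
    using termwise \<open>j \<in> I\<close> by (intro finite_sum_le_has_sum) auto
  then show ?thesis
    using sums by simp
qed

section \<open>The map \<open>\<phi>\<^sub>A\<close> and the strong limit of its iterates\<close>

locale contractive_cp_map =
  fixes A As :: "nat \<Rightarrow> 'a::chilbert_space \<Rightarrow> 'a" and I :: "nat set"
  assumes A_bounded: "\<And>i. i \<in> I \<Longrightarrow> bounded_op (A i)"
    and adjoint: "\<And>i. i \<in> I \<Longrightarrow> is_adjoint (A i) (As i)"
    and summable: "\<And>X x. bounded_op X \<Longrightarrow> (\<lambda>i. A i (X (As i x))) summable_on I"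
    and contractive: "\<And>X. bounded_op X \<Longrightarrow> onorm X \<le> 1 \<Longrightarrow> onorm (phiA A As I X) \<le> 1"
begin

abbreviation phi :: "('a \<Rightarrow> 'a) \<Rightarrow> 'a \<Rightarrow> 'a" where
  "phi \<equiv> phiA A As I"

lemma As_bounded: "i \<in> I \<Longrightarrow> bounded_op (As i)"
  by (rule bounded_op_adjoint [OF A_bounded adjoint])

lemma phi_bounded_op:
  assumes X: "bounded_op X"
  shows "bounded_op (phi X)"
proof -
  have "bounded_linear (\<lambda>x. A i (X (As i x)))" if "i \<in> I" for i
    using bounded_linear_compose [OF bounded_op_bounded_linear [OF A_bounded [OF that]]
        bounded_linear_compose [OF bounded_op_bounded_linear [OF X]
          bounded_op_bounded_linear [OF As_bounded [OF that]]]] .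
  then have "bounded_linear (phi X)"
    unfolding phiA_def
    by (rule bounded_linear_infsum [where f = "\<lambda>i x. A i (X (As i x))", OF _ summable [OF X]])
  moreover have "phi X (cscale c x) = cscale c (phi X x)" for c x
  proof -
    have "phi X (cscale c x) = infsum (\<lambda>i. cscale c (A i (X (As i x)))) I"
      unfolding phiA_def
      by (rule infsum_cong) (simp add: bounded_op_cscale A_bounded As_bounded X)
    also have "\<dots> = cscale c (phi X x)"
      unfolding phiA_def by (rule infsum_bounded_linear [OF bounded_linear_cscale summable [OF X]])
    finally show ?thesis .
  qed
  ultimately show ?thesis
    unfolding bounded_op_def by blast
qed

lemma phi_cinner:
  assumes X: "bounded_op X"
  shows "cinner y (phi X x) = infsum (\<lambda>i. cinner (As i y) (X (As i x))) I"
proof -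
  have "cinner y (phi X x) = infsum (\<lambda>i. cinner y (A i (X (As i x)))) I"
    unfolding phiA_def
    by (rule infsum_bounded_linear [OF bounded_linear_cinner_right summable [OF X], symmetric])
  also have "\<dots> = infsum (\<lambda>i. cinner (As i y) (X (As i x))) I"
    by (rule infsum_cong) (rule is_adjointD' [OF adjoint])
  finally show ?thesis .
qed

lemma phi_cinner_summable:
  assumes X: "bounded_op X"
  shows "(\<lambda>i. cinner (As i y) (X (As i x))) summable_on I"
proof -
  have "(\<lambda>i. cinner y (A i (X (As i x)))) summable_on I"
    by (rule summable_on_bounded_linear [OF bounded_linear_cinner_right summable [OF X]])
  then show ?thesis
    by (rule summable_on_cong [THEN iffD1, rotated]) (rule is_adjointD' [OF adjoint])
qed

lemma phi_Re_cinner: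
  assumes "bounded_op X"
  shows "Re (cinner x (phi X x)) = infsum (\<lambda>i. Re (cinner (As i x) (X (As i x)))) I"
  using phi_cinner [OF assms, of x x] infsum_Re [OF phi_cinner_summable [OF assms]] by simp

lemma phi_Re_cinner_summable:
  assumes "bounded_op X"
  shows "(\<lambda>i. Re (cinner (As i x) (X (As i x)))) summable_on I"
  by (rule summable_on_Re [OF phi_cinner_summable [OF assms]])

lemma positive_op_phi:
  assumes X: "positive_op X"
  shows "positive_op (phi X)"
proof -
  have X_bounded: "bounded_op X"
    using positive_opD(1) [OF X] .
  have "cinner (phi X x) y = cinner x (phi X y)" for x y
  proof -
    have "cinner (phi X x) y = cnj (infsum (\<lambda>i. cinner (As i y) (X (As i x))) I)"
      by (subst cinner_commute) (simp add: phi_cinner [OF X_bounded])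
    also have "\<dots> = infsum (\<lambda>i. cnj (cinner (As i y) (X (As i x)))) I"
      by (rule infsum_cnj [symmetric])
    also have "\<dots> = infsum (\<lambda>i. cinner (As i x) (X (As i y))) I"
      by (rule infsum_cong) (metis cinner_commute is_adjointD [OF positive_opD(2) [OF X]])
    also have "\<dots> = cinner x (phi X y)"
      by (rule phi_cinner [OF X_bounded, symmetric])
    finally show ?thesis .
  qed
  moreover have "0 \<le> Re (cinner x (phi X x))" for x
    unfolding phi_Re_cinner [OF X_bounded]
    by (rule infsum_nonneg) (rule positive_opD(3) [OF X])
  ultimately show ?thesis
    unfolding positive_op_def is_adjoint_def using phi_bounded_op [OF X_bounded] by blast
qed

lemma phi_contraction:
  assumes X: "bounded_op X" and contraction: "\<And>z. norm (X z) \<le> norm z"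
  shows "norm (phi X x) \<le> norm x"
proof -
  have "onorm X \<le> 1"
    by (rule onorm_bound) (simp_all add: contraction)
  then have "onorm (phi X) \<le> 1"
    by (rule contractive [OF X])
  then have "onorm (phi X) * norm x \<le> norm x"
    using mult_right_mono [of _ 1 "norm x"] by simp
  then show ?thesis
    using onorm [OF bounded_op_bounded_linear [OF phi_bounded_op [OF X]], of x] by simp
qed

lemma phi_mono:
  assumes "bounded_op X" and "bounded_op Y"
    and "\<And>z. Re (cinner z (X z)) \<le> Re (cinner z (Y z))"
  shows "Re (cinner x (phi X x)) \<le> Re (cinner x (phi Y x))"
  unfolding phi_Re_cinner [OF assms(1)] phi_Re_cinner [OF assms(2)]
  by (rule infsum_mono [OF phi_Re_cinner_summable phi_Re_cinner_summable]) (use assms in auto)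


definition phi_iter :: "nat \<Rightarrow> 'a \<Rightarrow> 'a" where
  "phi_iter k = (phi ^^ k) id"

lemma phi_iter_0: "phi_iter 0 = id"
  by (simp add: phi_iter_def)

lemma phi_iter_Suc: "phi_iter (Suc k) = phi (phi_iter k)"
  by (simp add: phi_iter_def)

lemma positive_contraction_phi_iter:
  shows "positive_op (phi_iter k)" and "norm (phi_iter k z) \<le> norm z"
proof (induction k arbitrary: z)
  case 0
  show "positive_op (phi_iter 0)" "norm (phi_iter 0 z) \<le> norm z" for z
    by (simp_all add: phi_iter_0 positive_op_id)
next
  case (Suc k)
  have "bounded_op (phi_iter k)"
    by (rule positive_opD(1) [OF Suc.IH(1)])
  then show "positive_op (phi_iter (Suc k))" "norm (phi_iter (Suc k) z) \<le> norm z" for z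
    unfolding phi_iter_Suc using Suc.IH by (auto intro: positive_op_phi phi_contraction)
qed

lemma phi_iter_bounded_op: "bounded_op (phi_iter k)"
  by (rule positive_opD(1) [OF positive_contraction_phi_iter(1)])

lemma phi_iter_decreasing: "Re (cinner x (phi_iter (Suc k) x)) \<le> Re (cinner x (phi_iter k x))"
proof (induction k arbitrary: x)
  case 0
  show ?case
    using Re_cinner_le_if_contraction [OF phi_contraction [OF bounded_op_id]]
    by (simp add: phi_iter_Suc phi_iter_0)
next
  case (Suc k)
  have "Re (cinner x (phi (phi_iter (Suc k)) x)) \<le> Re (cinner x (phi (phi_iter k) x))"
    by (rule phi_mono [OF phi_iter_bounded_op phi_iter_bounded_op Suc.IH])
  then show ?case
    by (simp only: phi_iter_Suc)
qed

definition phi_lim :: "'a \<Rightarrow> 'a" where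
  "phi_lim x = lim (\<lambda>k. phi_iter k x)"

lemma phi_iter_tendsto: "(\<lambda>k. phi_iter k x) \<longlonglongrightarrow> phi_lim x"
  unfolding phi_lim_def convergent_LIMSEQ_iff [symmetric]
  by (rule decreasing_positive_contractions_converge [where Y = phi_iter,
        OF positive_contraction_phi_iter phi_iter_decreasing])

lemma positive_contraction_phi_lim:
  shows "positive_op phi_lim" and "norm (phi_lim z) \<le> norm z"
  by (rule strong_limit_positive_contraction [where Y = phi_iter,
        OF positive_contraction_phi_iter phi_iter_tendsto])+

lemma phi_lim_le_phi_iter: "Re (cinner z (phi_lim z)) \<le> Re (cinner z (phi_iter k z))"
proof (rule LIMSEQ_le_const2)
  show "(\<lambda>m. Re (cinner z (phi_iter m z))) \<longlonglongrightarrow> Re (cinner z (phi_lim z))"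
    by (intro tendsto_Re bounded_linear.tendsto [OF bounded_linear_cinner_right phi_iter_tendsto])
  have "decseq (\<lambda>m. Re (cinner z (phi_iter m z)))"
    by (rule decseq_SucI) (rule phi_iter_decreasing)
  then show "\<exists>N. \<forall>m\<ge>N. Re (cinner z (phi_iter m z)) \<le> Re (cinner z (phi_iter k z))"
    unfolding decseq_def by blast
qed

lemma phi_iter_Suc_Re_cinner:
  "Re (cinner x (phi_iter (Suc k) x)) = infsum (\<lambda>i. Re (cinner (As i x) (phi_iter k (As i x)))) I"
  unfolding phi_iter_Suc by (rule phi_Re_cinner [OF phi_iter_bounded_op])

lemma phi_lim_kernel_invariant:
  assumes "j \<in> I"
  shows "As j ` ker_op phi_lim \<subseteq> ker_op phi_lim"
proof (rule image_subsetI)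
  fix x
  assume x: "x \<in> ker_op phi_lim"
  define y where "y = As j x"
  have "Re (cinner y (phi_lim y)) \<le> Re (cinner x (phi_iter (Suc k) x))" for k
  proof -
    have "Re (cinner y (phi_lim y)) \<le> Re (cinner y (phi_iter k y))"
      by (rule phi_lim_le_phi_iter)
    also have "\<dots> \<le> infsum (\<lambda>i. Re (cinner (As i x) (phi_iter k (As i x)))) I"
      using finite_sum_le_infsum [OF phi_Re_cinner_summable [OF phi_iter_bounded_op], of "{j}"]
        positive_opD(3) [OF positive_contraction_phi_iter(1)] \<open>j \<in> I\<close>
      by (simp add: y_def)
    also have "\<dots> = Re (cinner x (phi_iter (Suc k) x))"
      by (rule phi_iter_Suc_Re_cinner [symmetric])
    finally show ?thesis .
  qed
  then have "Re (cinner y (phi_lim y)) \<le> Re (cinner x (phi_lim x))"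
    by (intro LIMSEQ_le_const [OF LIMSEQ_Suc [OF tendsto_Re [OF bounded_linear.tendsto
            [OF bounded_linear_cinner_right phi_iter_tendsto]]]]) auto
  then have "Re (cinner y (phi_lim y)) = 0"
    using positive_opD(3) [OF positive_contraction_phi_lim(1), of y] x by simp
  then show "As j x \<in> ker_op phi_lim"
    using positive_op_eq_0_if_Re_cinner_eq_0 [OF positive_contraction_phi_lim(1)]
    by (simp add: y_def)
qed

lemma norm_sq_As_le_phi_iter_if_fixed:
  assumes "j \<in> I" and x: "x \<in> ker_op (id - phi_lim)"
  shows "Re (cinner (As j x) (As j x)) \<le> Re (cinner (As j x) (phi_iter k (As j x)))"
proof -
  define a where "a = (\<lambda>i. Re (cinner (As i x) (As i x)))"
  define b where "b = (\<lambda>i. Re (cinner (As i x) (phi_iter k (As i x))))"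
  \<comment> \<open>\<open>\<Sum>\<^sub>i a i \<le> \<parallel>x\<parallel>\<^sup>2 = \<langle>x, phi_lim x\<rangle> \<le> \<Sum>\<^sub>i b i\<close> while \<open>b i \<le> a i\<close>,
    so the \<open>j\<close>-th terms agree\<close>
  have "infsum a I = Re (cinner x (phi_iter 1 x))"
    using phi_iter_Suc_Re_cinner [of x 0] by (simp add: a_def phi_iter_0)
  also have "\<dots> \<le> Re (cinner x x)"
    using phi_iter_decreasing [of x 0] by (simp add: phi_iter_0)
  also have "\<dots> = Re (cinner x (phi_lim x))"
    using x by simp
  also have "\<dots> \<le> Re (cinner x (phi_iter (Suc k) x))"
    by (rule phi_lim_le_phi_iter)
  also have "\<dots> = infsum b I"
    unfolding b_def by (rule phi_iter_Suc_Re_cinner)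
  finally have sums: "infsum a I \<le> infsum b I" .
  have "a summable_on I"
    unfolding a_def using phi_Re_cinner_summable [OF bounded_op_id, of x] by simp
  moreover have "b summable_on I"
    unfolding b_def by (rule phi_Re_cinner_summable [OF phi_iter_bounded_op])
  moreover have "b i \<le> a i" for i
    unfolding a_def b_def by (rule Re_cinner_le_if_contraction [OF positive_contraction_phi_iter(2)])
  ultimately have "a j \<le> b j"
    using sums \<open>j \<in> I\<close> by (rule le_term_if_infsum_le)
  then show ?thesis
    by (simp add: a_def b_def)
qed

lemma phi_lim_fixed_invariant:
  assumes "j \<in> I"
  shows "As j ` ker_op (id - phi_lim) \<subseteq> ker_op (id - phi_lim)"
proof (rule image_subsetI)
  fix x
  assume x: "x \<in> ker_op (id - phi_lim)"
  define y where "y = As j x"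
  have "Re (cinner y y) \<le> Re (cinner y (phi_lim y))"
  proof (rule LIMSEQ_le_const)
    show "(\<lambda>k. Re (cinner y (phi_iter k y))) \<longlonglongrightarrow> Re (cinner y (phi_lim y))"
      by (intro tendsto_Re bounded_linear.tendsto [OF bounded_linear_cinner_right phi_iter_tendsto])
    show "\<exists>N. \<forall>k\<ge>N. Re (cinner y y) \<le> Re (cinner y (phi_iter k y))"
      using norm_sq_As_le_phi_iter_if_fixed [OF \<open>j \<in> I\<close> x] by (auto simp: y_def)
  qed
  then have "Re (cinner y ((id - phi_lim) y)) = 0"
    using Re_cinner_le_if_contraction [OF positive_contraction_phi_lim(2), of y]
    by (simp add: cinner_diff_right)
  then have "(id - phi_lim) y = 0"
    by (rule positive_op_eq_0_if_Re_cinner_eq_0 [OF positive_contraction_complement(1)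
          [OF positive_contraction_phi_lim]])
  then show "As j x \<in> ker_op (id - phi_lim)"
    by (simp add: ker_op_def y_def)
qed

lemma phi_lim_projection_reducing:
  assumes "orth_projection phi_lim" and "i \<in> I"
  shows "A i ` ker_op (id - phi_lim) \<subseteq> ker_op (id - phi_lim)"
    and "A i ` ker_op phi_lim \<subseteq> ker_op phi_lim"
  using orth_projection_fixed_invariant_if_adjoint_kernel_invariant
      [OF assms(1) adjoint [OF assms(2)] phi_lim_kernel_invariant [OF assms(2)]]
    orth_projection_kernel_invariant_if_adjoint_fixed_invariant
      [OF assms(1) adjoint [OF assms(2)] phi_lim_fixed_invariant [OF assms(2)]] .

end

theorem theorem4p7:
  fixes A As :: "nat \<Rightarrow> 'a::chilbert_space \<Rightarrow> 'a" and I :: "nat set"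
  assumes bnd: "\<And>i. i \<in> I \<Longrightarrow> bounded_op (A i)"
    and adj: "\<And>i. i \<in> I \<Longrightarrow> is_adjoint (A i) (As i)"
    and welldef: "\<And>X x. bounded_op X \<Longrightarrow> (\<lambda>i. A i (X (As i x))) summable_on I"
    and contr: "\<And>X. bounded_op X \<Longrightarrow> onorm X \<le> 1 \<Longrightarrow> onorm (phiA A As I X) \<le> 1"
  shows "\<exists>D. bounded_op D \<and> (\<forall>x. (\<lambda>k. ((phiA A As I ^^ k) id) x) \<longlonglongrightarrow> D x)
     \<and> (\<forall>x\<in>ker_op (id - D). \<forall>y\<in>ker_op D. cinner x y = 0)
     \<and> (\<forall>x. \<exists>m a b. x = m + a + b \<and> a \<in> ker_op (id - D) \<and> b \<in> ker_op D
            \<and> (\<forall>y\<in>ker_op (id - D) \<union> ker_op D. cinner m y = 0))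
     \<and> (\<forall>i\<in>I. As i ` ker_op (id - D) \<subseteq> ker_op (id - D) \<and> As i ` ker_op D \<subseteq> ker_op D)
     \<and> (orth_projection D \<longrightarrow>
          (\<forall>x. \<exists>a b. x = a + b \<and> a \<in> ker_op (id - D) \<and> b \<in> ker_op D)
        \<and> (\<forall>i\<in>I. A i ` ker_op (id - D) \<subseteq> ker_op (id - D) \<and> A i ` ker_op D \<subseteq> ker_op D
               \<and> As i ` ker_op (id - D) \<subseteq> ker_op (id - D) \<and> As i ` ker_op D \<subseteq> ker_op D))"
proof -
  interpret contractive_cp_map A As I
    using bnd adj welldef contr by unfold_locales
  have D: "positive_op phi_lim" and contraction: "\<And>z. norm (phi_lim z) \<le> norm z"
    by (rule positive_contraction_phi_lim)+
  show ?thesis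
  proof (intro exI [of _ phi_lim] conjI ballI allI impI)
    show "bounded_op phi_lim"
      by (rule positive_opD(1) [OF D])
    show "(\<lambda>k. (phi ^^ k) id x) \<longlonglongrightarrow> phi_lim x" for x
      by (rule phi_iter_tendsto [unfolded phi_iter_def])
    show "cinner x y = 0" if "x \<in> ker_op (id - phi_lim)" and "y \<in> ker_op phi_lim" for x y
      by (rule self_adjoint_fixed_orthogonal_kernel [OF positive_opD(2) [OF D] that])
    show "\<exists>m a b. x = m + a + b \<and> a \<in> ker_op (id - phi_lim) \<and> b \<in> ker_op phi_lim
        \<and> (\<forall>y\<in>ker_op (id - phi_lim) \<union> ker_op phi_lim. cinner m y = 0)" for x
      by (rule positive_contraction_orthogonal_decomposition [OF D contraction])
    show "\<exists>a b. x = a + b \<and> a \<in> ker_op (id - phi_lim) \<and> b \<in> ker_op phi_lim"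
      if "orth_projection phi_lim" for x
      by (rule orth_projection_decomposition [OF that])
    fix i
    assume "i \<in> I"
    then show As_ker: "As i ` ker_op phi_lim \<subseteq> ker_op phi_lim"
      and As_fixed: "As i ` ker_op (id - phi_lim) \<subseteq> ker_op (id - phi_lim)"
      by (rule phi_lim_kernel_invariant phi_lim_fixed_invariant)+
    show "As i ` ker_op phi_lim \<subseteq> ker_op phi_lim"
      and "As i ` ker_op (id - phi_lim) \<subseteq> ker_op (id - phi_lim)" if "orth_projection phi_lim"
      by (fact As_ker, fact As_fixed)
    show "A i ` ker_op (id - phi_lim) \<subseteq> ker_op (id - phi_lim)"
      and "A i ` ker_op phi_lim \<subseteq> ker_op phi_lim" if "orth_projection phi_lim"
      using that \<open>i \<in> I\<close> by (rule phi_lim_projection_reducing)+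
  qed
qed

end
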